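(* Let $\Sigma$ be finite, $n\ge1$, $\mathbb{X}\subseteq\Sigma^n$, and let $\rho,\sigma$ be $|\mathbb{X}|\times|\mathbb{X}|$ Gram matrices of unit vectors. Then $\mathcal{D}_H(\rho,\sigma)\le\mathrm{Adv}^\star(\rho,\sigma)$.
   Context: $(A\circ B)_{ij}=A_{ij}B_{ij}$; $\|A\|$ is the operator norm, $\|A\|_{\mathrm{tr}}$ the trace norm. Hadamard product distance: $\mathcal{D}_H(\rho,\sigma)=\max_{u:\|u\|=1}\mathcal{D}(\rho\circ uu^*,\sigma\circ uu^* )$, where $\mathcal D(\rho',\sigma')=\frac12\|\rho'-\sigma'\|_{\mathrm{tr}}$ is the trace distance of density matrices. Adversary bound: for $j\in[n]$ let $\Delta_j$ be the $|\mathbb{X}|\times|\mathbb{X}|$ matrix with $(\Delta_j)_{x,y}=1-\delta_{x_j,y_j}$. $\mathrm{Adv}^\star(\rho,\sigma)=\max_{\Gamma}\|\Gamma\circ(\rho-\sigma)\|$ over Hermitian $|\mathbb{X}|\times|\mathbb{X}|$ matrices $\Gamma$ with $\|\Gamma\circ\Delta_j\|\le 1$ for all $j\in[n]$. *)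

theory Defs
  imports "Jordan_Normal_Form.Schur_Decomposition" "Jordan_Normal_Form.Char_Poly"
    "HOL-Computational_Algebra.Fundamental_Theorem_Algebra"
begin

definition vnorm :: "complex vec \<Rightarrow> real" where
  "vnorm v = sqrt (\<Sum>i<dim_vec v. (cmod (v $ i))\<^sup>2)"

definition op_norm :: "complex mat \<Rightarrow> real" where
  "op_norm A = Sup {vnorm (A *\<^sub>v v) | v. v \<in> carrier_vec (dim_col A) \<and> vnorm v = 1}"

(* trace norm: sum of the singular values (with multiplicity), i.e. the square roots
   of the eigenvalues of A^* A, taken as roots of its characteristic polynomial *)
definition trace_norm :: "complex mat \<Rightarrow> real" where
  "trace_norm A = (\<Sum>e\<in># proots (char_poly (mat_adjoint A * A)). sqrt (Re e))"

definition hadamard :: "complex mat \<Rightarrow> complex mat \<Rightarrow> complex mat" where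
  "hadamard A B = mat (dim_row A) (dim_col A) (\<lambda>(i,j). A $$ (i,j) * B $$ (i,j))"

definition outer_self :: "complex vec \<Rightarrow> complex mat" where
  "outer_self u = mat (dim_vec u) (dim_vec u) (\<lambda>(i,j). u $ i * cnj (u $ j))"

definition trace_dist :: "complex mat \<Rightarrow> complex mat \<Rightarrow> real" where
  "trace_dist A B = trace_norm (A - B) / 2"

definition hadamard_dist :: "complex mat \<Rightarrow> complex mat \<Rightarrow> real" where
  "hadamard_dist \<rho> \<sigma> = Sup {trace_dist (hadamard \<rho> (outer_self u)) (hadamard \<sigma> (outer_self u)) | u.
      u \<in> carrier_vec (dim_row \<rho>) \<and> vnorm u = 1}"

definition gram_unit :: "complex mat \<Rightarrow> bool" where
  "gram_unit \<rho> \<longleftrightarrow> (\<exists>d vs. length vs = dim_row \<rho> \<and> dim_col \<rho> = dim_row \<rho> \<and>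
      (\<forall>v\<in>set vs. v \<in> carrier_vec d \<and> vnorm v = 1) \<and>
      \<rho> = mat (length vs) (length vs) (\<lambda>(i,j). (vs ! j) \<bullet>c (vs ! i)))"

(* Delta_j, rows/columns indexed by the enumeration xs of X:
   (Delta_j)_{x,y} = 1 - delta_{x_j,y_j}  (positions j are 0-based) *)
definition Delta :: "'a list list \<Rightarrow> nat \<Rightarrow> complex mat" where
  "Delta xs j = mat (length xs) (length xs)
     (\<lambda>(i,k). if xs ! i ! j = xs ! k ! j then 0 else 1)"

definition adv_star :: "'a list list \<Rightarrow> nat \<Rightarrow> complex mat \<Rightarrow> complex mat \<Rightarrow> real" where
  "adv_star xs n \<rho> \<sigma> = Sup {op_norm (hadamard \<Gamma> (\<rho> - \<sigma>)) | \<Gamma>.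
      \<Gamma> \<in> carrier_mat (length xs) (length xs) \<and> mat_adjoint \<Gamma> = \<Gamma> \<and>
      (\<forall>j<n. op_norm (hadamard \<Gamma> (Delta xs j)) \<le> 1)}"

end

theory Submission
  imports Defs "HOL-Analysis.L2_Norm"
begin

text \<open>Fix a unit vector \<open>u\<close>. The matrix \<open>A = (\<rho> - \<sigma>) \<circ> u u\<^sup>*\<close> is Hermitian, so by the
  spectral theorem \<open>\<parallel>A\<parallel>\<^sub>t\<^sub>r\<close> is the sum of the absolute values of its eigenvalues, and
  \<open>\<parallel>A\<parallel>\<^sub>t\<^sub>r / 2 = \<Sum>\<^sub>i\<^sub>j \<Gamma>\<^sub>i\<^sub>j A\<^sub>i\<^sub>j\<close> for \<open>\<Gamma>\<close> half the transposed sign of \<open>A\<close>, a Hermitian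
  matrix with \<open>\<parallel>\<Gamma>\<parallel> \<le> 1/2\<close>. A Hadamard product with the 0/1 indicator of the diagonal blocks
  of a partition does not increase the operator norm; \<open>\<Delta>\<^sub>j\<close> is the complement of such an
  indicator, so \<open>\<parallel>\<Gamma> \<circ> \<Delta>\<^sub>j\<parallel> \<le> 2\<parallel>\<Gamma>\<parallel> \<le> 1\<close> and \<open>\<Gamma>\<close> is feasible. Finally
  \<open>\<Sum>\<^sub>i\<^sub>j \<Gamma>\<^sub>i\<^sub>j A\<^sub>i\<^sub>j = \<langle>(\<Gamma> \<circ> (\<rho> - \<sigma>)) \<bar>u\<bar>, \<bar>u\<bar>\<rangle>\<close> with \<open>\<bar>u\<bar>\<close> the conjugate
  vector, which is at most \<open>\<parallel>\<Gamma> \<circ> (\<rho> - \<sigma>)\<parallel>\<close>. The supremum defining \<open>Adv\<^sup>\<star>\<close> is finite: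
  distinct strings differ in some position, so feasible \<open>\<Gamma>\<close> have off-diagonal entries of
  modulus at most \<open>1\<close>, while \<open>\<rho> - \<sigma>\<close> has zero diagonal.\<close>

lemma cscalar_prod_sum:
  "dim_vec w = dim_vec v \<Longrightarrow> v \<bullet>c w = (\<Sum>i<dim_vec v. v $ i * cnj (w $ i))"
  by (simp add: scalar_prod_def atLeast0LessThan)

lemma cscalar_prod_smult_left:
  fixes v w :: "complex vec"
  shows "dim_vec w = dim_vec v \<Longrightarrow> (a \<cdot>\<^sub>v v) \<bullet>c w = a * (v \<bullet>c w)"
  by (simp add: cscalar_prod_sum sum_distrib_left mult_ac)

lemma cscalar_prod_smult_right:
  fixes v w :: "complex vec"
  shows "dim_vec w = dim_vec v \<Longrightarrow> v \<bullet>c (b \<cdot>\<^sub>v w) = cnj b * (v \<bullet>c w)"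
  by (simp add: cscalar_prod_sum sum_distrib_left mult_ac)

lemma cnj_cscalar_prod: "dim_vec w = dim_vec v \<Longrightarrow> cnj (v \<bullet>c w) = w \<bullet>c v"
  by (simp add: cscalar_prod_sum mult_ac)

lemma cscalar_prod_vCons:
  "dim_vec y = dim_vec y' \<Longrightarrow> vCons a y \<bullet>c vCons b y' = a * cnj b + y \<bullet>c y'"
  by (simp add: cscalar_prod_sum sum.lessThan_Suc_shift del: sum.lessThan_Suc)

lemma vnorm_nonneg: "vnorm v \<ge> 0"
  unfolding vnorm_def by (simp add: sum_nonneg)

lemma vnorm_power2: "(vnorm v)\<^sup>2 = (\<Sum>i<dim_vec v. (cmod (v $ i))\<^sup>2)"
  unfolding vnorm_def by (simp add: sum_nonneg)

lemma vnorm_eq_L2_set: "vnorm v = L2_set (\<lambda>i. cmod (v $ i)) {..<dim_vec v}"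
  by (simp add: vnorm_def L2_set_def)

lemma of_real_vnorm_power2: "complex_of_real ((vnorm v)\<^sup>2) = v \<bullet>c v"
proof -
  have "complex_of_real ((vnorm v)\<^sup>2) = (\<Sum>i<dim_vec v. complex_of_real ((cmod (v $ i))\<^sup>2))"
    by (simp add: vnorm_power2)
  also have "\<dots> = (\<Sum>i<dim_vec v. v $ i * cnj (v $ i))"
    by (rule sum.cong, simp, metis complex_norm_square)
  finally show ?thesis by (simp add: cscalar_prod_sum)
qed

lemma vnorm_eqI: "(vnorm v)\<^sup>2 = (vnorm w)\<^sup>2 \<Longrightarrow> vnorm v = vnorm w"
  using vnorm_nonneg by (metis power2_eq_imp_eq)

lemma vnorm_smult: "vnorm (a \<cdot>\<^sub>v v) = cmod a * vnorm v"
proof -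
  have "(vnorm (a \<cdot>\<^sub>v v))\<^sup>2 = (cmod a * vnorm v)\<^sup>2"
    by (simp add: vnorm_power2 power_mult_distrib norm_mult sum_distrib_left)
  thus ?thesis using vnorm_nonneg by (metis norm_ge_zero mult_nonneg_nonneg power2_eq_imp_eq)
qed

lemma vnorm_conjugate: "vnorm (conjugate v) = vnorm v"
  unfolding vnorm_def by (intro arg_cong[where f = sqrt] sum.cong refl) auto

lemma vnorm_unit_vec: "k < n \<Longrightarrow> vnorm (unit_vec n k :: complex vec) = 1"
proof -
  assume k: "k < n"
  have "(\<Sum>i<n. (cmod ((unit_vec n k :: complex vec) $ i))\<^sup>2) = (\<Sum>i<n. if i = k then 1 else 0)"
    by (intro sum.cong refl) (auto simp: unit_vec_def)
  also have "\<dots> = 1" using k by simp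
  finally show ?thesis unfolding vnorm_def by simp
qed

lemma norm_index_le_vnorm: "i < dim_vec v \<Longrightarrow> cmod (v $ i) \<le> vnorm v"
proof -
  assume i: "i < dim_vec v"
  have "(cmod (v $ i))\<^sup>2 \<le> (\<Sum>k<dim_vec v. (cmod (v $ k))\<^sup>2)"
    by (rule member_le_sum) (use i in auto)
  hence "(cmod (v $ i))\<^sup>2 \<le> (vnorm v)\<^sup>2" by (simp add: vnorm_power2)
  thus ?thesis using vnorm_nonneg by (rule power2_le_imp_le)
qed

lemma norm_cscalar_prod_le:
  assumes "dim_vec w = dim_vec v"
  shows "cmod (v \<bullet>c w) \<le> vnorm v * vnorm w"
proof -
  have "cmod (v \<bullet>c w) = cmod (\<Sum>i<dim_vec v. v $ i * cnj (w $ i))"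
    using assms by (simp add: cscalar_prod_sum)
  also have "\<dots> \<le> (\<Sum>i<dim_vec v. \<bar>cmod (v $ i)\<bar> * \<bar>cmod (w $ i)\<bar>)"
    by (rule order_trans[OF norm_sum]) (simp add: norm_mult)
  also have "\<dots> \<le> L2_set (\<lambda>i. cmod (v $ i)) {..<dim_vec v} * L2_set (\<lambda>i. cmod (w $ i)) {..<dim_vec v}"
    by (rule L2_set_mult_ineq)
  also have "\<dots> = vnorm v * vnorm w" using assms by (simp add: vnorm_eq_L2_set)
  finally show ?thesis .
qed

lemma vnorm_diff_le:
  assumes "dim_vec w = dim_vec v"
  shows "vnorm (v - w) \<le> vnorm v + vnorm w"
proof -
  have "vnorm (v - w) = L2_set (\<lambda>i. cmod ((v - w) $ i)) {..<dim_vec v}"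
    using assms by (simp add: vnorm_eq_L2_set)
  also have "\<dots> \<le> L2_set (\<lambda>i. cmod (v $ i) + cmod (w $ i)) {..<dim_vec v}"
    by (rule L2_set_mono) (use assms in \<open>auto intro: norm_triangle_ineq4\<close>)
  also have "\<dots> \<le> vnorm v + vnorm w"
    using L2_set_triangle_ineq assms by (simp add: vnorm_eq_L2_set)
  finally show ?thesis .
qed

lemma mult_mat_vec_index_sum:
  "A \<in> carrier_mat r n \<Longrightarrow> v \<in> carrier_vec n \<Longrightarrow> i < r \<Longrightarrow>
   (A *\<^sub>v v) $ i = (\<Sum>j<n. A $$ (i,j) * v $ j)"
  by (auto simp: scalar_prod_def atLeast0LessThan intro!: sum.cong)

lemma mult_mat_index_sum:
  "A \<in> carrier_mat r n \<Longrightarrow> B \<in> carrier_mat n c \<Longrightarrow> i < r \<Longrightarrow> j < c \<Longrightarrow>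
   (A * B) $$ (i,j) = (\<Sum>k<n. A $$ (i,k) * B $$ (k,j))"
  by (auto simp: scalar_prod_def atLeast0LessThan intro!: sum.cong)

lemma smult_mat_mult_vec:
  assumes M: "M \<in> carrier_mat r c" and v: "v \<in> carrier_vec c"
  shows "(a \<cdot>\<^sub>m M) *\<^sub>v v = a \<cdot>\<^sub>v (M *\<^sub>v v)"
  by (rule eq_vecI)
    (use M v in \<open>auto simp: mult_mat_vec_index_sum[of "a \<cdot>\<^sub>m M" r c] mult_mat_vec_index_sum[OF M v]
       sum_distrib_left mult.assoc
       simp del: index_mult_mat_vec\<close>)

lemma mat_adjoint_dim[simp]:
  "dim_row (mat_adjoint A) = dim_col A" "dim_col (mat_adjoint A) = dim_row A"
  by (simp_all add: mat_adjoint_def mat_of_rows_def)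

lemma mat_adjoint_index[simp]:
  "i < dim_col A \<Longrightarrow> j < dim_row A \<Longrightarrow> mat_adjoint A $$ (i,j) = cnj (A $$ (j,i))"
  by (simp add: mat_adjoint_def mat_of_rows_def)

lemma mat_adjoint_carrier[simp]: "A \<in> carrier_mat r c \<Longrightarrow> mat_adjoint A \<in> carrier_mat c r"
  unfolding carrier_mat_def by simp

lemma mat_adjoint_adjoint[simp]: "mat_adjoint (mat_adjoint A) = (A :: complex mat)"
  by (rule eq_matI) auto

lemma hermitian_index:
  "mat_adjoint A = A \<Longrightarrow> A \<in> carrier_mat m m \<Longrightarrow> i < m \<Longrightarrow> j < m \<Longrightarrow>
   cnj (A $$ (j,i)) = A $$ (i,j)"
  by (metis mat_adjoint_index carrier_matD)

lemma cscalar_prod_mat_adjoint: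
  fixes M :: "complex mat"
  assumes M: "M \<in> carrier_mat r c" and x: "x \<in> carrier_vec c" and y: "y \<in> carrier_vec r"
  shows "(M *\<^sub>v x) \<bullet>c y = x \<bullet>c (mat_adjoint M *\<^sub>v y)"
proof -
  have "(M *\<^sub>v x) \<bullet>c y = (\<Sum>i<r. (\<Sum>j<c. M $$ (i,j) * x $ j) * cnj (y $ i))"
    using M x y by (simp add: cscalar_prod_sum mult_mat_vec_index_sum del: index_mult_mat_vec)
  also have "\<dots> = (\<Sum>j<c. \<Sum>i<r. x $ j * (M $$ (i,j) * cnj (y $ i)))"
    by (subst sum.swap) (simp add: sum_distrib_right mult.assoc mult.left_commute)
  also have "\<dots> = (\<Sum>j<c. x $ j * cnj (\<Sum>i<r. cnj (M $$ (i,j)) * y $ i))"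
    by (simp add: sum_distrib_left)
  also have "\<dots> = x \<bullet>c (mat_adjoint M *\<^sub>v y)"
    using M x y by (simp add: cscalar_prod_sum mult_mat_vec_index_sum[of "mat_adjoint M" c r]
        del: index_mult_mat_vec)
  finally show ?thesis .
qed

definition unitary :: "nat \<Rightarrow> complex mat \<Rightarrow> bool" where
  "unitary n U \<longleftrightarrow> U \<in> carrier_mat n n \<and> mat_adjoint U * U = 1\<^sub>m n \<and> U * mat_adjoint U = 1\<^sub>m n"

lemma unitary_mat_adjoint: "unitary n U \<Longrightarrow> unitary n (mat_adjoint U)"
  unfolding unitary_def by auto

lemma unitary_cscalar_prod:
  assumes U: "unitary n U" and x: "x \<in> carrier_vec n" and y: "y \<in> carrier_vec n"
  shows "(U *\<^sub>v x) \<bullet>c (U *\<^sub>v y) = x \<bullet>c y"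
proof -
  have Uc: "U \<in> carrier_mat n n" and UU: "mat_adjoint U * U = 1\<^sub>m n"
    using U by (auto simp: unitary_def)
  have "mat_adjoint U *\<^sub>v (U *\<^sub>v y) = (mat_adjoint U * U) *\<^sub>v y"
    by (rule assoc_mult_mat_vec[symmetric]) (use Uc y in auto)
  hence "mat_adjoint U *\<^sub>v (U *\<^sub>v y) = y" using UU y by simp
  thus ?thesis using cscalar_prod_mat_adjoint[OF Uc x, of "U *\<^sub>v y"] Uc y by simp
qed

lemma vnorm_unitary_mult:
  assumes U: "unitary n U" and v: "v \<in> carrier_vec n"
  shows "vnorm (U *\<^sub>v v) = vnorm v"
  using unitary_cscalar_prod[OF U v v] of_real_vnorm_power2[of v] of_real_vnorm_power2[of "U *\<^sub>v v"]
  by (intro vnorm_eqI) (metis of_real_eq_iff)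

definition orthonormal :: "nat \<Rightarrow> complex vec list \<Rightarrow> bool" where
  "orthonormal n ws \<longleftrightarrow> length ws = n \<and> set ws \<subseteq> carrier_vec n \<and>
    (\<forall>i<n. \<forall>j<n. ws ! i \<bullet>c ws ! j = (if i = j then 1 else 0))"

lemma orthonormalD:
  assumes "orthonormal n ws"
  shows "length ws = n" "\<And>i. i < n \<Longrightarrow> ws ! i \<in> carrier_vec n"
    "\<And>i j. i < n \<Longrightarrow> j < n \<Longrightarrow> ws ! i \<bullet>c ws ! j = (if i = j then 1 else 0)"
  using assms unfolding orthonormal_def by auto

lemma unitary_mat_of_cols:
  assumes on: "orthonormal n ws"
  shows "unitary n (mat_of_cols n ws)"
proof -
  let ?W = "mat_of_cols n ws"
  note ws = orthonormalD[OF on]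
  have W: "?W \<in> carrier_mat n n" using ws(1) by (metis mat_of_cols_carrier(1))
  have left: "mat_adjoint ?W * ?W = 1\<^sub>m n"
  proof (rule eq_matI)
    fix i j assume "i < dim_row (1\<^sub>m n :: complex mat)" "j < dim_col (1\<^sub>m n :: complex mat)"
    hence i: "i < n" and j: "j < n" by auto
    have "(mat_adjoint ?W * ?W) $$ (i,j) = (\<Sum>k<n. cnj (?W $$ (k,i)) * ?W $$ (k,j))"
      using i j W by (auto simp: mult_mat_index_sum[of _ n n] simp del: index_mult_mat intro!: sum.cong)
    also have "\<dots> = (\<Sum>k<n. (ws ! j) $ k * cnj ((ws ! i) $ k))"
      using i j ws(1) by (simp add: mat_of_cols_def mult_ac)
    also have "\<dots> = ws ! j \<bullet>c ws ! i" using ws(2)[OF i] ws(2)[OF j] by (simp add: cscalar_prod_sum)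
    finally show "(mat_adjoint ?W * ?W) $$ (i,j) = (1\<^sub>m n :: complex mat) $$ (i,j)"
      using ws(3)[OF j i] i j by auto
  qed (use ws(1) in auto)
  have "?W * mat_adjoint ?W = 1\<^sub>m n"
    by (rule mat_mult_left_right_inverse[OF _ W left]) (use W in auto)
  thus ?thesis using W left by (simp add: unitary_def)
qed

lemma orthonormal_unitary_map:
  assumes U: "unitary n U" and on: "orthonormal n ws"
  shows "orthonormal n (map (\<lambda>w. U *\<^sub>v w) ws)"
proof -
  note ws = orthonormalD[OF on]
  have "(U *\<^sub>v ws ! i) \<bullet>c (U *\<^sub>v ws ! j) = ws ! i \<bullet>c ws ! j" if "i < n" "j < n" for i j
    using unitary_cscalar_prod[OF U ws(2)[OF that(1)] ws(2)[OF that(2)]] .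
  thus ?thesis using on U by (auto simp: orthonormal_def unitary_def)
qed

lemma orthonormal_conjugate:
  assumes on: "orthonormal n ws"
  shows "orthonormal n (map conjugate ws)"
proof -
  note ws = orthonormalD[OF on]
  have "conjugate (ws ! i) \<bullet>c conjugate (ws ! j) = cnj (ws ! i \<bullet>c ws ! j)" if "i < n" "j < n" for i j
    using ws(2)[OF that(1)] ws(2)[OF that(2)]
    by (simp add: cscalar_prod_sum scalar_prod_def atLeast0LessThan mult.commute)
  thus ?thesis using on ws by (auto simp: orthonormal_def)
qed

section \<open>Spectral theorem for Hermitian matrices\<close>

definition normalize_vec :: "complex vec \<Rightarrow> complex vec" where
  "normalize_vec v = complex_of_real (1 / vnorm v) \<cdot>\<^sub>v v"

lemma normalize_vec_dim[simp]: "dim_vec (normalize_vec v) = dim_vec v"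
  by (simp add: normalize_vec_def)

lemma normalize_vec_carrier[simp]: "normalize_vec v \<in> carrier_vec n \<longleftrightarrow> v \<in> carrier_vec n"
  by (simp add: normalize_vec_def)

lemma cscalar_prod_normalize_vec:
  assumes "dim_vec w = dim_vec v"
  shows "normalize_vec v \<bullet>c normalize_vec w = complex_of_real (1 / (vnorm v * vnorm w)) * (v \<bullet>c w)"
  using assms by (simp add: normalize_vec_def cscalar_prod_smult_left cscalar_prod_smult_right)

lemma cscalar_prod_normalize_vec_self: "v \<bullet>c v \<noteq> 0 \<Longrightarrow> normalize_vec v \<bullet>c normalize_vec v = 1"
  using cscalar_prod_normalize_vec[of v v] of_real_vnorm_power2[of v]
  by (simp add: power2_eq_square del: of_real_power)

lemma normalize_vec_unit:
  assumes "v \<bullet>c v = 1"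
  shows "normalize_vec v = v"
proof -
  have "vnorm v = 1" using assms of_real_vnorm_power2[of v] vnorm_nonneg[of v]
    by (metis of_real_eq_1_iff abs_of_nonneg real_sqrt_abs real_sqrt_one)
  thus ?thesis by (simp add: normalize_vec_def)
qed

lemma orthonormal_completion:
  assumes v: "v \<in> carrier_vec n" and v1: "v \<bullet>c v = 1"
  obtains ws where "orthonormal n ws" "ws ! 0 = v"
proof -
  have v0: "v \<noteq> 0\<^sub>v n" using v1 by auto
  interpret cof_vec_space n "TYPE(complex)" .
  define b where "b = basis_completion v"
  from basis_completion[OF v v0, folded b_def]
  have dist_b: "distinct b" and indep: "\<not> lin_dep (set b)" and b: "set b \<subseteq> carrier_vec n"
    and hdb: "hd b = v" and len_b: "length b = n" by auto
  have n0: "n \<noteq> 0" using v0 v by auto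
  from hdb len_b n0 obtain vs where bv: "b = v # vs" by (cases b) auto
  define gs where "gs = gram_schmidt n b"
  from gram_schmidt_result[OF b dist_b indep refl, folded gs_def]
  have gs: "set gs \<subseteq> carrier_vec n" "corthogonal gs" "length gs = n"
    by (auto simp: len_b)
  from gram_schmidt_hd[OF v, of vs, folded bv] have "hd gs = v" unfolding gs_def .
  hence gs0: "gs ! 0 = v" using gs(3) n0 by (cases gs) auto
  define ws where "ws = map normalize_vec gs"
  have gsc: "\<And>i. i < n \<Longrightarrow> gs ! i \<in> carrier_vec n" using gs by auto
  have "ws ! i \<bullet>c ws ! j = (if i = j then 1 else 0)" if i: "i < n" and j: "j < n" for i j
  proof (cases "i = j")
    case True
    thus ?thesis using corthogonalD[OF gs(2)] i gs(3) by (simp add: ws_def cscalar_prod_normalize_vec_self)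
  next
    case False
    thus ?thesis using corthogonalD[OF gs(2)] i j gs(3) gsc[OF i] gsc[OF j]
      by (simp add: ws_def cscalar_prod_normalize_vec)
  qed
  hence "orthonormal n ws" using gs by (auto simp: orthonormal_def ws_def)
  moreover have "ws ! 0 = v" using gs(3) n0 gs0 v1 by (simp add: ws_def normalize_vec_unit)
  ultimately show ?thesis using that by blast
qed

lemma exists_unit_eigenvector:
  fixes A :: "complex mat"
  assumes A: "A \<in> carrier_mat (Suc n) (Suc n)"
  obtains v e where "v \<in> carrier_vec (Suc n)" "v \<bullet>c v = 1" "A *\<^sub>v v = e \<cdot>\<^sub>v v"
proof -
  have "degree (char_poly A) = Suc n" using degree_monic_char_poly[OF A] by simp
  hence "\<not> constant (poly (char_poly A))" by (simp add: constant_degree)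
  then obtain e where "poly (char_poly A) e = 0" using fundamental_theorem_of_algebra by blast
  hence "eigenvalue A e" using eigenvalue_root_char_poly[OF A] by simp
  then obtain w where "eigenvector A w e" using find_eigenvector[OF A] by blast
  hence w: "w \<in> carrier_vec (Suc n)" "w \<noteq> 0\<^sub>v (Suc n)" "A *\<^sub>v w = e \<cdot>\<^sub>v w"
    using A unfolding eigenvector_def by auto
  have "w \<bullet>c w \<noteq> 0" using w by simp
  moreover have "A *\<^sub>v normalize_vec w = e \<cdot>\<^sub>v normalize_vec w"
    using mult_mat_vec[OF A w(1)] w(3) by (simp add: normalize_vec_def smult_smult_assoc mult.commute)
  ultimately show ?thesis
    using that[of "normalize_vec w"] w(1) cscalar_prod_normalize_vec_self by (simp add: normalize_vec_def)
qed

lemma hermitian_eigenvalue_real: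
  fixes A :: "complex mat"
  assumes A: "A \<in> carrier_mat n n" and h: "mat_adjoint A = A"
    and v: "v \<in> carrier_vec n" "v \<bullet>c v = 1" and Av: "A *\<^sub>v v = e \<cdot>\<^sub>v v"
  shows "e = complex_of_real (Re e)"
proof -
  have "e = (A *\<^sub>v v) \<bullet>c v" using v by (simp add: Av cscalar_prod_smult_left)
  also have "\<dots> = v \<bullet>c (A *\<^sub>v v)" using cscalar_prod_mat_adjoint[OF A v(1) v(1)] h by simp
  also have "\<dots> = cnj e" using v by (simp add: Av cscalar_prod_smult_right)
  finally show ?thesis by (simp add: complex_eq_iff)
qed

lemma orthonormal_vCons:
  assumes on: "orthonormal n ys"
  shows "orthonormal (Suc n) (vCons 1 (0\<^sub>v n) # map (vCons 0) ys)"
proof -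
  note ys = orthonormalD[OF on]
  have "(vCons 1 (0\<^sub>v n) # map (vCons 0) ys) ! i \<bullet>c (vCons 1 (0\<^sub>v n) # map (vCons 0) ys) ! j
      = (if i = j then 1 else 0)" if "i < Suc n" "j < Suc n" for i j
    using that ys ys(2)[of "i - 1"] ys(2)[of "j - 1"] ys(3)[of "i - 1" "j - 1"]
    by (cases i; cases j) (auto simp: cscalar_prod_vCons cscalar_prod_sum)
  thus ?thesis using ys by (auto simp: orthonormal_def in_set_conv_nth)
qed

lemma mat_of_cols_compression_index:
  fixes A :: "complex mat"
  assumes A: "A \<in> carrier_mat n n" and ws: "length ws = n" "set ws \<subseteq> carrier_vec n"
    and i: "i < n" and j: "j < n"
  shows "(mat_adjoint (mat_of_cols n ws) * A * mat_of_cols n ws) $$ (i,j) = (A *\<^sub>v ws ! j) \<bullet>c ws ! i"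
proof -
  let ?W = "mat_of_cols n ws"
  have W: "?W \<in> carrier_mat n n" using ws(1) by (metis mat_of_cols_carrier(1))
  have wi: "ws ! i \<in> carrier_vec n" and wj: "ws ! j \<in> carrier_vec n" using ws i j by auto
  have "(mat_adjoint ?W * A * ?W) $$ (i,j) = (mat_adjoint ?W * (A * ?W)) $$ (i,j)"
    using W A by (simp add: assoc_mult_mat[of _ n n _ n])
  also have "\<dots> = (\<Sum>k<n. mat_adjoint ?W $$ (i,k) * (A * ?W) $$ (k,j))"
    by (rule mult_mat_index_sum) (use W A i j in auto)
  also have "\<dots> = (\<Sum>k<n. cnj ((ws ! i) $ k) * (A *\<^sub>v ws ! j) $ k)"
    using W A i j ws wi wj by (auto simp: mat_of_cols_index intro!: sum.cong)
  also have "\<dots> = (A *\<^sub>v ws ! j) \<bullet>c ws ! i" using A wi wj by (simp add: cscalar_prod_sum mult.commute)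
  finally show ?thesis .
qed

lemma unitary_similarity_eigenvector:
  assumes W: "unitary n W" and A: "A \<in> carrier_mat n n"
    and x: "x \<in> carrier_vec n" and Bx: "(mat_adjoint W * A * W) *\<^sub>v x = c \<cdot>\<^sub>v x"
  shows "A *\<^sub>v (W *\<^sub>v x) = c \<cdot>\<^sub>v (W *\<^sub>v x)"
proof -
  have Wc: "W \<in> carrier_mat n n" using W by (simp add: unitary_def)
  have "W * (mat_adjoint W * A * W) = W * (mat_adjoint W * (A * W))"
    using Wc A by (simp add: assoc_mult_mat[of _ n n _ n])
  also have "\<dots> = (W * mat_adjoint W) * (A * W)"
    by (rule assoc_mult_mat[symmetric]) (use Wc A in auto)
  also have "\<dots> = A * W" using W A by (simp add: unitary_def)
  finally have WB: "W * (mat_adjoint W * A * W) = A * W" .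
  have Bc: "mat_adjoint W * A * W \<in> carrier_mat n n"
    using Wc A by (metis mult_carrier_mat mat_adjoint_carrier)
  have "A *\<^sub>v (W *\<^sub>v x) = (W * (mat_adjoint W * A * W)) *\<^sub>v x"
    using Wc A x by (simp add: WB)
  also have "\<dots> = W *\<^sub>v ((mat_adjoint W * A * W) *\<^sub>v x)" by (rule assoc_mult_mat_vec[OF Wc Bc x])
  also have "\<dots> = W *\<^sub>v (c \<cdot>\<^sub>v x)" by (simp only: Bx)
  also have "\<dots> = c \<cdot>\<^sub>v (W *\<^sub>v x)" using Wc x by (rule mult_mat_vec)
  finally show ?thesis .
qed

lemma vCons_zero_eigenvector:
  fixes B :: "complex mat"
  assumes B: "B \<in> carrier_mat (Suc n) (Suc n)" and B0: "\<And>j. j < n \<Longrightarrow> B $$ (0, Suc j) = 0"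
    and y: "y \<in> carrier_vec n"
    and eig: "mat n n (\<lambda>(i,j). B $$ (Suc i, Suc j)) *\<^sub>v y = c \<cdot>\<^sub>v y"
  shows "B *\<^sub>v vCons 0 y = c \<cdot>\<^sub>v vCons 0 y"
proof (rule eq_vecI)
  fix i assume "i < dim_vec (c \<cdot>\<^sub>v vCons 0 y)"
  hence i: "i < Suc n" using y by simp
  have "(B *\<^sub>v vCons 0 y) $ i = (\<Sum>j<n. B $$ (i, Suc j) * y $ j)"
    using B i y by (simp add: mult_mat_vec_index_sum[of _ "Suc n" "Suc n"] sum.lessThan_Suc_shift
        del: index_mult_mat_vec sum.lessThan_Suc)
  also have "\<dots> = (c \<cdot>\<^sub>v vCons 0 y) $ i"
  proof (cases i)
    case 0
    then show ?thesis using B0 by simp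
  next
    case (Suc i')
    hence "i' < n" using i by simp
    thus ?thesis using Suc y arg_cong[OF eig, of "\<lambda>v. v $ i'"]
      by (simp add: mult_mat_vec_index_sum[of _ n n] del: index_mult_mat_vec)
  qed
  finally show "(B *\<^sub>v vCons 0 y) $ i = (c \<cdot>\<^sub>v vCons 0 y) $ i" .
qed (use B y in simp)

lemma mat_of_cols_mult_vCons_one:
  fixes ws :: "complex vec list"
  assumes len: "length ws = Suc n" and w0: "ws ! 0 \<in> carrier_vec m"
  shows "mat_of_cols m ws *\<^sub>v vCons 1 (0\<^sub>v n) = ws ! 0"
proof (rule eq_vecI)
  fix r assume "r < dim_vec (ws ! 0)"
  hence r: "r < m" using w0 by simp
  have "(mat_of_cols m ws *\<^sub>v vCons 1 (0\<^sub>v n)) $ r =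
      (\<Sum>j<Suc n. mat_of_cols m ws $$ (r,j) * vCons 1 (0\<^sub>v n) $ j)"
    by (rule mult_mat_vec_index_sum) (use len r in auto)
  also have "\<dots> = mat_of_cols m ws $$ (r,0)" by (simp add: sum.lessThan_Suc_shift del: sum.lessThan_Suc)
  finally show "(mat_of_cols m ws *\<^sub>v vCons 1 (0\<^sub>v n)) $ r = ws ! 0 $ r"
    using r len by (simp add: mat_of_cols_index)
qed (use len w0 in auto)

lemma hermitian_deflation:
  fixes A :: "complex mat"
  assumes A: "A \<in> carrier_mat (Suc n) (Suc n)" and h: "mat_adjoint A = A"
    and on: "orthonormal (Suc n) ws" and Aw: "A *\<^sub>v ws ! 0 = e \<cdot>\<^sub>v ws ! 0"
  defines "B \<equiv> mat_adjoint (mat_of_cols (Suc n) ws) * A * mat_of_cols (Suc n) ws"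
  shows "\<And>j. j < n \<Longrightarrow> B $$ (0, Suc j) = 0"
    and "mat_adjoint (mat n n (\<lambda>(i,j). B $$ (Suc i, Suc j))) = mat n n (\<lambda>(i,j). B $$ (Suc i, Suc j))"
proof -
  note ws = orthonormalD[OF on]
  have B_index: "B $$ (i,j) = (A *\<^sub>v ws ! j) \<bullet>c ws ! i" if "i < Suc n" "j < Suc n" for i j
    unfolding B_def using A on that
    by (intro mat_of_cols_compression_index) (auto simp: orthonormal_def)
  have A_sym: "(A *\<^sub>v ws ! i) \<bullet>c ws ! j = ws ! i \<bullet>c (A *\<^sub>v ws ! j)" if "i < Suc n" "j < Suc n" for i j
    using cscalar_prod_mat_adjoint[OF A ws(2)[OF that(1)] ws(2)[OF that(2)]] h by simp
  show "B $$ (0, Suc j) = 0" if j: "j < n" for j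
  proof -
    have "B $$ (0, Suc j) = ws ! Suc j \<bullet>c (e \<cdot>\<^sub>v ws ! 0)" using B_index A_sym j Aw by simp
    also have "\<dots> = cnj e * (ws ! Suc j \<bullet>c ws ! 0)"
      using ws(2)[of "Suc j"] ws(2)[of 0] j by (simp add: cscalar_prod_smult_right)
    also have "\<dots> = 0" using ws(3)[of "Suc j" 0] j by simp
    finally show ?thesis .
  qed
  show "mat_adjoint (mat n n (\<lambda>(i,j). B $$ (Suc i, Suc j))) = mat n n (\<lambda>(i,j). B $$ (Suc i, Suc j))"
  proof (rule eq_matI)
    fix i j assume "i < dim_row (mat n n (\<lambda>(i,j). B $$ (Suc i, Suc j)))"
      "j < dim_col (mat n n (\<lambda>(i,j). B $$ (Suc i, Suc j)))"
    hence ij: "i < n" "j < n" by auto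
    have "cnj (ws ! Suc i \<bullet>c (A *\<^sub>v ws ! Suc j)) = (A *\<^sub>v ws ! Suc j) \<bullet>c ws ! Suc i"
      by (rule cnj_cscalar_prod) (use A ws(2)[of "Suc i"] ij in auto)
    thus "mat_adjoint (mat n n (\<lambda>(i,j). B $$ (Suc i, Suc j))) $$ (i,j) =
        mat n n (\<lambda>(i,j). B $$ (Suc i, Suc j)) $$ (i,j)"
      using ij by (simp add: B_index A_sym)
  qed auto
qed

lemma hermitian_eigenbasis:
  fixes A :: "complex mat"
  assumes "A \<in> carrier_mat n n" "mat_adjoint A = A"
  shows "\<exists>us ls. orthonormal n us \<and> length ls = n \<and>
    (\<forall>k<n. A *\<^sub>v us ! k = complex_of_real (ls ! k) \<cdot>\<^sub>v us ! k)"
  using assms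
proof (induction n arbitrary: A)
  case 0
  then show ?case by (intro exI[of _ "[]"]) (simp add: orthonormal_def)
next
  case (Suc n)
  have A: "A \<in> carrier_mat (Suc n) (Suc n)" and h: "mat_adjoint A = A" using Suc.prems by auto
  obtain v e where v: "v \<in> carrier_vec (Suc n)" "v \<bullet>c v = 1" and Av: "A *\<^sub>v v = e \<cdot>\<^sub>v v"
    using exists_unit_eigenvector[OF A] .
  obtain ws where on_ws: "orthonormal (Suc n) ws" and ws0: "ws ! 0 = v"
    using orthonormal_completion[OF v] .
  note ws = orthonormalD[OF on_ws]
  define W where "W = mat_of_cols (Suc n) ws"
  have W: "unitary (Suc n) W" unfolding W_def by (rule unitary_mat_of_cols[OF on_ws])
  define B where "B = mat_adjoint W * A * W"
  have B: "B \<in> carrier_mat (Suc n) (Suc n)"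
    using W A unfolding B_def unitary_def by (metis mult_carrier_mat mat_adjoint_carrier)
  have Aw: "A *\<^sub>v ws ! 0 = e \<cdot>\<^sub>v ws ! 0" using Av ws0 by simp
  note deflation = hermitian_deflation[OF A h on_ws Aw, folded W_def, folded B_def]
  define A' where "A' = mat n n (\<lambda>(i,j). B $$ (Suc i, Suc j))"
  obtain ys \<mu>s where on_ys: "orthonormal n ys" and len: "length \<mu>s = n"
    and eig: "\<forall>k<n. A' *\<^sub>v ys ! k = complex_of_real (\<mu>s ! k) \<cdot>\<^sub>v ys ! k"
    using Suc.IH[of A'] deflation(2) by (auto simp: A'_def)
  define xs where "xs = vCons 1 (0\<^sub>v n) # map (vCons 0) ys"
  have on_xs: "orthonormal (Suc n) xs" unfolding xs_def by (rule orthonormal_vCons[OF on_ys])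
  have "W *\<^sub>v xs ! 0 = v"
    using mat_of_cols_mult_vCons_one[of ws n "Suc n"] ws ws0 v(1) by (simp add: W_def xs_def)
  hence eig0: "A *\<^sub>v (W *\<^sub>v xs ! 0) = complex_of_real (Re e) \<cdot>\<^sub>v (W *\<^sub>v xs ! 0)"
    using Av hermitian_eigenvalue_real[OF A h v Av] by simp
  have eig_Suc: "A *\<^sub>v (W *\<^sub>v xs ! Suc k) = complex_of_real (\<mu>s ! k) \<cdot>\<^sub>v (W *\<^sub>v xs ! Suc k)"
    if k: "k < n" for k
    using unitary_similarity_eigenvector[OF W A] vCons_zero_eigenvector[OF B deflation(1)]
      eig k orthonormalD[OF on_ys] orthonormalD[OF on_xs]
    by (simp add: xs_def A'_def B_def)
  show ?case
  proof (intro exI conjI)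
    show "orthonormal (Suc n) (map (\<lambda>x. W *\<^sub>v x) xs)" by (rule orthonormal_unitary_map[OF W on_xs])
    show "length (Re e # \<mu>s) = Suc n" using len by simp
    show "\<forall>k<Suc n. A *\<^sub>v map (\<lambda>x. W *\<^sub>v x) xs ! k =
        complex_of_real ((Re e # \<mu>s) ! k) \<cdot>\<^sub>v map (\<lambda>x. W *\<^sub>v x) xs ! k"
      using eig0 eig_Suc orthonormalD(1)[OF on_xs] by (auto simp: less_Suc_eq_0_disj)
  qed
qed

section \<open>Trace norm of a Hermitian matrix\<close>

definition diag_of_list :: "complex list \<Rightarrow> complex mat" where
  "diag_of_list cs = mat (length cs) (length cs) (\<lambda>(i,j). if i = j then cs ! i else 0)"

lemma diag_of_list_carrier[simp]:
  "diag_of_list cs \<in> carrier_mat (length cs) (length cs)"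
  "dim_row (diag_of_list cs) = length cs" "dim_col (diag_of_list cs) = length cs"
  by (auto simp: diag_of_list_def)

lemma mult_diag_of_list_index:
  assumes M: "M \<in> carrier_mat r (length cs)" and i: "i < r" and k: "k < length cs"
  shows "(M * diag_of_list cs) $$ (i,k) = M $$ (i,k) * cs ! k"
proof -
  have "(M * diag_of_list cs) $$ (i,k) = (\<Sum>j<length cs. M $$ (i,j) * diag_of_list cs $$ (j,k))"
    by (rule mult_mat_index_sum[OF M diag_of_list_carrier(1) i k])
  also have "\<dots> = (\<Sum>j<length cs. if j = k then M $$ (i,k) * cs ! k else 0)"
    by (intro sum.cong refl) (use k in \<open>auto simp: diag_of_list_def\<close>)
  finally show ?thesis using k by simp
qed

lemma diag_of_list_mult_vec_index:
  assumes v: "v \<in> carrier_vec (length cs)" and i: "i < length cs"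
  shows "(diag_of_list cs *\<^sub>v v) $ i = cs ! i * v $ i"
proof -
  have "(diag_of_list cs *\<^sub>v v) $ i = (\<Sum>j<length cs. diag_of_list cs $$ (i,j) * v $ j)"
    by (rule mult_mat_vec_index_sum[OF diag_of_list_carrier(1) v i])
  also have "\<dots> = (\<Sum>j<length cs. if j = i then cs ! i * v $ i else 0)"
    by (intro sum.cong refl) (use i in \<open>auto simp: diag_of_list_def\<close>)
  finally show ?thesis using i by simp
qed

lemma vnorm_diag_of_list_mult:
  assumes v: "v \<in> carrier_vec (length cs)" and unimodular: "\<forall>k<length cs. cmod (cs ! k) = 1"
  shows "vnorm (diag_of_list cs *\<^sub>v v) = vnorm v"
  using v unimodular
  by (intro vnorm_eqI) (simp add: vnorm_power2 diag_of_list_mult_vec_index norm_mult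
      del: index_mult_mat_vec)

lemma eigenbasis_decomposition:
  fixes A :: "complex mat"
  assumes A: "A \<in> carrier_mat m m" and on: "orthonormal m us" and len: "length ls = m"
    and eig: "\<forall>k<m. A *\<^sub>v us ! k = complex_of_real (ls ! k) \<cdot>\<^sub>v us ! k"
  shows "A = mat_of_cols m us * diag_of_list (map complex_of_real ls) * mat_adjoint (mat_of_cols m us)"
proof -
  let ?U = "mat_of_cols m us" and ?D = "diag_of_list (map complex_of_real ls)"
  have U: "unitary m ?U" by (rule unitary_mat_of_cols[OF on])
  hence Uc: "?U \<in> carrier_mat m m" by (simp add: unitary_def)
  note us = orthonormalD[OF on]
  have AU: "A * ?U = ?U * ?D"
  proof (rule eq_matI)
    fix i k assume "i < dim_row (?U * ?D)" "k < dim_col (?U * ?D)"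
    hence i: "i < m" and k: "k < m" using Uc len by auto
    have "(A * ?U) $$ (i,k) = (A *\<^sub>v us ! k) $ i" using A Uc i k us by simp
    also have "\<dots> = complex_of_real (ls ! k) * (us ! k) $ i" using eig k i us(2)[OF k] by simp
    also have "\<dots> = (?U * ?D) $$ (i,k)"
      by (subst mult_diag_of_list_index[of _ m]) (use Uc len i k us in \<open>auto simp: mat_of_cols_index\<close>)
    finally show "(A * ?U) $$ (i,k) = (?U * ?D) $$ (i,k)" .
  qed (use A Uc len in auto)
  have "A = A * (?U * mat_adjoint ?U)" using U A by (simp add: unitary_def)
  also have "\<dots> = (A * ?U) * mat_adjoint ?U"
    by (rule assoc_mult_mat[symmetric, of _ m m _ m _ m]) (use A Uc in auto)
  finally show ?thesis unfolding AU .
qed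

lemma proots_prod_linear: "proots (\<Prod>a\<leftarrow>as. [:- a, 1:]) = mset (as :: complex list)"
proof (induction as)
  case (Cons a as)
  have "proots (\<Prod>a\<leftarrow>a # as. [:- a, 1:]) = proots ([:- a, 1:] * (\<Prod>a\<leftarrow>as. [:- a, 1:]))"
    by simp
  also have "\<dots> = proots [:- a, 1:] + proots (\<Prod>a\<leftarrow>as. [:- a, 1:])"
    by (rule proots_mult) (auto simp: prod_list_zero_iff)
  finally show ?case using Cons by simp
qed simp

lemma char_poly_diag_of_list: "char_poly (diag_of_list cs) = (\<Prod>a\<leftarrow>cs. [:- a, 1:])"
proof -
  have "char_poly (diag_of_list cs) = (\<Prod>a\<leftarrow>diag_mat (diag_of_list cs). [:- a, 1:])"
    by (rule char_poly_upper_triangular[OF diag_of_list_carrier(1)])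
      (auto simp: upper_triangular_def diag_of_list_def)
  also have "diag_mat (diag_of_list cs) = cs"
    by (intro nth_equalityI) (auto simp: diag_mat_def diag_of_list_def)
  finally show ?thesis .
qed

lemma trace_norm_eq_sum_abs:
  assumes "char_poly (mat_adjoint A * A) = (\<Prod>a\<leftarrow>map (\<lambda>x. complex_of_real (x\<^sup>2)) ls. [:- a, 1:])"
  shows "trace_norm A = (\<Sum>x\<leftarrow>ls. \<bar>x\<bar>)"
proof -
  have "trace_norm A = (\<Sum>e\<in># mset (map (\<lambda>x. complex_of_real (x\<^sup>2)) ls). sqrt (Re e))"
    unfolding trace_norm_def assms by (simp only: proots_prod_linear)
  also have "sqrt (Re (complex_of_real (x\<^sup>2))) = \<bar>x\<bar>" for x by (simp del: of_real_power)
  hence "(\<Sum>e\<in># mset (map (\<lambda>x. complex_of_real (x\<^sup>2)) ls). sqrt (Re e)) = (\<Sum>x\<leftarrow>ls. \<bar>x\<bar>)"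
    by (induction ls) (simp_all del: of_real_power)
  finally show ?thesis .
qed

lemma trace_norm_eigenbasis:
  fixes A :: "complex mat"
  assumes A: "A \<in> carrier_mat m m" and h: "mat_adjoint A = A" and on: "orthonormal m us"
    and len: "length ls = m" and eig: "\<forall>k<m. A *\<^sub>v us ! k = complex_of_real (ls ! k) \<cdot>\<^sub>v us ! k"
  shows "trace_norm A = (\<Sum>k<m. \<bar>ls ! k\<bar>)"
proof -
  let ?U = "mat_of_cols m us" and ?D = "diag_of_list (map complex_of_real ls)"
  let ?D2 = "diag_of_list (map (\<lambda>x. complex_of_real (x\<^sup>2)) ls)"
  have U: "unitary m ?U" by (rule unitary_mat_of_cols[OF on])
  hence Uc: "?U \<in> carrier_mat m m" and UA: "mat_adjoint ?U \<in> carrier_mat m m"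
    by (auto simp: unitary_def)
  have D: "?D \<in> carrier_mat m m" and D2: "?D2 \<in> carrier_mat m m"
    using len diag_of_list_carrier(1) by (metis length_map)+
  have DD: "?D * ?D = ?D2"
  proof (rule eq_matI)
    fix i j assume "i < dim_row ?D2" "j < dim_col ?D2"
    thus "(?D * ?D) $$ (i,j) = ?D2 $$ (i,j)"
      by (subst mult_diag_of_list_index[of _ m]) (use D len in \<open>auto simp: diag_of_list_def power2_eq_square\<close>)
  qed (use D D2 in auto)
  have cancel: "mat_adjoint ?U * (?U * Y) = Y" if Y: "Y \<in> carrier_mat m m" for Y
  proof -
    have "mat_adjoint ?U * (?U * Y) = (mat_adjoint ?U * ?U) * Y"
      by (rule assoc_mult_mat[symmetric]) (use Uc UA Y in auto)
    thus ?thesis using U Y by (simp add: unitary_def)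
  qed
  have "A * A = ?U * (?D * ?D) * mat_adjoint ?U"
    using eigenbasis_decomposition[OF A on len eig] Uc D UA
    by (simp add: assoc_mult_mat[of _ m m _ m _ m] cancel)
  hence "similar_mat (mat_adjoint A * A) ?D2"
    unfolding h DD similar_mat_def similar_mat_wit_def
    by (intro exI[of _ ?U] exI[of _ "mat_adjoint ?U"]) (use A U UA D2 in \<open>auto simp: Let_def unitary_def\<close>)
  hence "trace_norm A = (\<Sum>x\<leftarrow>ls. \<bar>x\<bar>)"
    by (intro trace_norm_eq_sum_abs) (simp add: char_poly_similar char_poly_diag_of_list)
  thus ?thesis using len by (simp add: sum_list_sum_nth atLeast0LessThan)
qed

lemma vnorm_mult_vec_le_entries:
  fixes M :: "complex mat"
  assumes M: "M \<in> carrier_mat r c" and v: "v \<in> carrier_vec c"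
    and K: "\<And>i j. i < r \<Longrightarrow> j < c \<Longrightarrow> cmod (M $$ (i,j)) \<le> K"
  shows "vnorm (M *\<^sub>v v) \<le> sqrt (real (r * c)) * K * vnorm v"
proof (cases "r = 0 \<or> c = 0")
  case True
  hence "vnorm (M *\<^sub>v v) = 0" using M v by (auto simp: vnorm_def scalar_prod_def)
  thus ?thesis using True by auto
next
  case False
  hence K0: "K \<ge> 0" using K[of 0 0] by (meson norm_ge_zero order_trans neq0_conv)
  have row: "(cmod ((M *\<^sub>v v) $ i))\<^sup>2 \<le> (real c * K\<^sup>2) * (vnorm v)\<^sup>2" if i: "i < r" for i
  proof -
    have "cmod ((M *\<^sub>v v) $ i) \<le> (\<Sum>j<c. \<bar>cmod (M $$ (i,j))\<bar> * \<bar>cmod (v $ j)\<bar>)"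
      using M v i by (auto simp: mult_mat_vec_index_sum norm_mult simp del: index_mult_mat_vec
          intro: order_trans[OF norm_sum])
    also have "\<dots> \<le> L2_set (\<lambda>j. cmod (M $$ (i,j))) {..<c} * L2_set (\<lambda>j. cmod (v $ j)) {..<c}"
      by (rule L2_set_mult_ineq)
    also have "\<dots> = L2_set (\<lambda>j. cmod (M $$ (i,j))) {..<c} * vnorm v"
      using v by (simp add: vnorm_eq_L2_set)
    finally have le: "cmod ((M *\<^sub>v v) $ i) \<le> L2_set (\<lambda>j. cmod (M $$ (i,j))) {..<c} * vnorm v" .
    let ?L = "L2_set (\<lambda>j. cmod (M $$ (i,j))) {..<c}"
    have "?L\<^sup>2 = (\<Sum>j<c. (cmod (M $$ (i,j)))\<^sup>2)" by (simp add: L2_set_def sum_nonneg)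
    also have "\<dots> \<le> (\<Sum>j<c. K\<^sup>2)" by (intro sum_mono power_mono) (use K i in auto)
    finally have L: "?L\<^sup>2 \<le> real c * K\<^sup>2" by simp
    have "(cmod ((M *\<^sub>v v) $ i))\<^sup>2 \<le> (?L * vnorm v)\<^sup>2" by (rule power_mono[OF le]) simp
    also have "\<dots> = ?L\<^sup>2 * (vnorm v)\<^sup>2" by (simp add: power_mult_distrib)
    also have "\<dots> \<le> (real c * K\<^sup>2) * (vnorm v)\<^sup>2" by (rule mult_right_mono[OF L]) simp
    finally show ?thesis .
  qed
  have "(vnorm (M *\<^sub>v v))\<^sup>2 \<le> (\<Sum>i<r. (real c * K\<^sup>2) * (vnorm v)\<^sup>2)"
  proof -
    have "(vnorm (M *\<^sub>v v))\<^sup>2 = (\<Sum>i<r. (cmod ((M *\<^sub>v v) $ i))\<^sup>2)"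
      using M by (simp add: vnorm_power2 del: index_mult_mat_vec)
    also have "\<dots> \<le> (\<Sum>i<r. (real c * K\<^sup>2) * (vnorm v)\<^sup>2)" by (rule sum_mono) (use row in auto)
    finally show ?thesis .
  qed
  also have "\<dots> = (sqrt (real (r * c)) * K * vnorm v)\<^sup>2" by (simp add: power_mult_distrib)
  finally show ?thesis
    by (rule power2_le_imp_le) (intro mult_nonneg_nonneg; use K0 vnorm_nonneg in simp)
qed

lemma op_norm_set_bdd_above:
  assumes M: "M \<in> carrier_mat r c"
  shows "bdd_above {vnorm (M *\<^sub>v v) | v. v \<in> carrier_vec (dim_col M) \<and> vnorm v = 1}"
proof -
  define K where "K = (\<Sum>i<r. \<Sum>j<c. cmod (M $$ (i,j)))"
  have K: "cmod (M $$ (i,j)) \<le> K" if "i < r" "j < c" for i j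
  proof -
    have "cmod (M $$ (i,j)) \<le> (\<Sum>j'<c. cmod (M $$ (i,j')))" by (rule member_le_sum) (use that in auto)
    also have "\<dots> \<le> K" unfolding K_def by (rule member_le_sum) (use that in \<open>auto intro: sum_nonneg\<close>)
    finally show ?thesis .
  qed
  have "vnorm (M *\<^sub>v v) \<le> sqrt (real (r * c)) * K" if "v \<in> carrier_vec c" "vnorm v = 1" for v
    using vnorm_mult_vec_le_entries[OF M that(1) K] that(2) by simp
  thus ?thesis using M by (intro bdd_aboveI[of _ "sqrt (real (r * c)) * K"]) auto
qed

lemma vnorm_le_op_norm:
  assumes M: "M \<in> carrier_mat r c" and v: "v \<in> carrier_vec c" and v1: "vnorm v = 1"
  shows "vnorm (M *\<^sub>v v) \<le> op_norm M"
  unfolding op_norm_def by (rule cSup_upper[OF _ op_norm_set_bdd_above[OF M]]) (use M v v1 in auto)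

lemma op_norm_leI:
  assumes M: "M \<in> carrier_mat r c" and c: "c > 0"
    and bound: "\<And>v. v \<in> carrier_vec c \<Longrightarrow> vnorm v = 1 \<Longrightarrow> vnorm (M *\<^sub>v v) \<le> K"
  shows "op_norm M \<le> K"
  unfolding op_norm_def
proof (rule cSup_least)
  show "{vnorm (M *\<^sub>v v) |v. v \<in> carrier_vec (dim_col M) \<and> vnorm v = 1} \<noteq> {}"
    using vnorm_unit_vec[OF c] M by (auto intro!: exI[of _ "unit_vec c 0"])
qed (use bound M in auto)

lemma norm_index_le_op_norm:
  fixes M :: "complex mat"
  assumes M: "M \<in> carrier_mat r c" and i: "i < r" and k: "k < c"
  shows "cmod (M $$ (i,k)) \<le> op_norm M"
proof -
  have "(M *\<^sub>v unit_vec c k) $ i = (\<Sum>j<c. M $$ (i,j) * unit_vec c k $ j)"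
    by (rule mult_mat_vec_index_sum[OF M _ i]) simp
  also have "\<dots> = (\<Sum>j<c. if j = k then M $$ (i,k) else 0)"
    by (intro sum.cong refl) (auto simp: unit_vec_def)
  finally have "(M *\<^sub>v unit_vec c k) $ i = M $$ (i,k)" using k by simp
  hence "cmod (M $$ (i,k)) \<le> vnorm (M *\<^sub>v unit_vec c k)"
    using norm_index_le_vnorm[of i "M *\<^sub>v unit_vec c k"] M i by simp
  also have "\<dots> \<le> op_norm M" using vnorm_le_op_norm[OF M] vnorm_unit_vec[OF k] by simp
  finally show ?thesis .
qed

section \<open>Hadamard products with block patterns\<close>

lemma hadamard_carrier[simp]: "A \<in> carrier_mat r c \<Longrightarrow> hadamard A B \<in> carrier_mat r c"
  unfolding hadamard_def carrier_mat_def by auto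

lemma hadamard_dim[simp]:
  "dim_row (hadamard A B) = dim_row A" "dim_col (hadamard A B) = dim_col A"
  unfolding hadamard_def by auto

lemma hadamard_index[simp]:
  "i < dim_row A \<Longrightarrow> j < dim_col A \<Longrightarrow> hadamard A B $$ (i,j) = A $$ (i,j) * B $$ (i,j)"
  unfolding hadamard_def by auto

definition block_restrict :: "(nat \<Rightarrow> 'b) \<Rightarrow> 'b \<Rightarrow> complex vec \<Rightarrow> complex vec" where
  "block_restrict f a y = vec (dim_vec y) (\<lambda>k. if f k = a then y $ k else 0)"

lemma block_restrict_carrier[simp]: "y \<in> carrier_vec m \<Longrightarrow> block_restrict f a y \<in> carrier_vec m"
  by (simp add: block_restrict_def)

lemma sum_vnorm_power2_block_restrict:
  "(\<Sum>a\<in>f ` {..<dim_vec y}. (vnorm (block_restrict f a y))\<^sup>2) = (vnorm y)\<^sup>2"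
proof -
  let ?I = "{..<dim_vec y}"
  have "(vnorm (block_restrict f a y))\<^sup>2 = (\<Sum>k\<in>?I. if f k = a then (cmod (y $ k))\<^sup>2 else 0)" for a
    unfolding vnorm_power2 by (intro sum.cong) (auto simp: block_restrict_def)
  also have "\<dots> a = (\<Sum>k\<in>{k \<in> ?I. f k = a}. (cmod (y $ k))\<^sup>2)" for a
    by (rule sum.inter_filter[symmetric]) simp
  finally have "(\<Sum>a\<in>f ` ?I. (vnorm (block_restrict f a y))\<^sup>2) =
      (\<Sum>a\<in>f ` ?I. \<Sum>k\<in>{k \<in> ?I. f k = a}. (cmod (y $ k))\<^sup>2)" by simp
  also have "\<dots> = (vnorm y)\<^sup>2" unfolding vnorm_power2 by (rule sum.group) auto
  finally show ?thesis .
qed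

lemma hadamard_block_diag_mult_vec_index:
  fixes G :: "complex mat"
  assumes G: "G \<in> carrier_mat m m" and y: "y \<in> carrier_vec m" and i: "i < m"
  shows "(hadamard G (mat m m (\<lambda>(i,k). if f i = f k then 1 else 0)) *\<^sub>v y) $ i =
    (G *\<^sub>v block_restrict f (f i) y) $ i"
  using G y i
  by (auto simp: mult_mat_vec_index_sum[of _ m m] block_restrict_def simp del: index_mult_mat_vec
      intro!: sum.cong)

lemma vnorm_hadamard_block_diag_le:
  fixes G :: "complex mat" and f :: "nat \<Rightarrow> 'b"
  assumes G: "G \<in> carrier_mat m m" and C0: "C \<ge> 0"
    and C: "\<And>z. z \<in> carrier_vec m \<Longrightarrow> vnorm (G *\<^sub>v z) \<le> C * vnorm z"
    and y: "y \<in> carrier_vec m"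
  shows "vnorm (hadamard G (mat m m (\<lambda>(i,k). if f i = f k then 1 else 0)) *\<^sub>v y) \<le> C * vnorm y"
proof -
  let ?H = "hadamard G (mat m m (\<lambda>(i,k). if f i = f k then 1 else 0))"
  let ?r = "\<lambda>a. block_restrict f a y" and ?I = "{..<m}" and ?T = "f ` {..<m}"
  have "(vnorm (?H *\<^sub>v y))\<^sup>2 = (\<Sum>i\<in>?I. (cmod ((G *\<^sub>v ?r (f i)) $ i))\<^sup>2)"
    using G y by (simp add: vnorm_power2 hadamard_block_diag_mult_vec_index del: index_mult_mat_vec)
  also have "\<dots> = (\<Sum>a\<in>?T. \<Sum>i\<in>{i \<in> ?I. f i = a}. (cmod ((G *\<^sub>v ?r (f i)) $ i))\<^sup>2)"
    by (rule sum.group[symmetric]) auto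
  also have "\<dots> = (\<Sum>a\<in>?T. \<Sum>i\<in>{i \<in> ?I. f i = a}. (cmod ((G *\<^sub>v ?r a) $ i))\<^sup>2)"
    by (intro sum.cong refl) auto
  also have "\<dots> \<le> (\<Sum>a\<in>?T. (vnorm (G *\<^sub>v ?r a))\<^sup>2)"
    using G y by (auto simp: vnorm_power2 intro!: sum_mono sum_mono2)
  also have "\<dots> \<le> (\<Sum>a\<in>?T. (C * vnorm (?r a))\<^sup>2)"
    using y by (intro sum_mono power_mono C vnorm_nonneg) simp
  also have "\<dots> = (C * vnorm y)\<^sup>2"
    using sum_vnorm_power2_block_restrict[of f y] y
    by (simp add: power_mult_distrib flip: sum_distrib_left)
  finally show ?thesis
    by (rule power2_le_imp_le) (use C0 vnorm_nonneg in simp)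
qed

lemma vnorm_hadamard_block_offdiag_le:
  fixes G :: "complex mat" and f :: "nat \<Rightarrow> 'b"
  assumes G: "G \<in> carrier_mat m m" and C0: "C \<ge> 0"
    and C: "\<And>z. z \<in> carrier_vec m \<Longrightarrow> vnorm (G *\<^sub>v z) \<le> C * vnorm z"
    and y: "y \<in> carrier_vec m"
  shows "vnorm (hadamard G (mat m m (\<lambda>(i,k). if f i = f k then 0 else 1)) *\<^sub>v y) \<le> 2 * C * vnorm y"
proof -
  let ?E = "mat m m (\<lambda>(i,k). if f i = f k then 1 else (0::complex))"
  let ?D = "mat m m (\<lambda>(i,k). if f i = f k then 0 else (1::complex))"
  have "hadamard G ?D *\<^sub>v y = G *\<^sub>v y - hadamard G ?E *\<^sub>v y"
    using G y by (intro eq_vecI) (auto simp: mult_mat_vec_index_sum[of _ m m] sum_subtractf[symmetric]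
        algebra_simps simp del: index_mult_mat_vec intro!: sum.cong)
  hence "vnorm (hadamard G ?D *\<^sub>v y) \<le> vnorm (G *\<^sub>v y) + vnorm (hadamard G ?E *\<^sub>v y)"
    using G y by (simp add: vnorm_diff_le)
  also have "\<dots> \<le> C * vnorm y + C * vnorm y"
    by (intro add_mono C y vnorm_hadamard_block_diag_le[OF G C0 C y])
  finally show ?thesis by simp
qed

section \<open>A dual witness for the trace norm\<close>

lemma conj_eigenbasis_diag_index:
  assumes on: "orthonormal m us" and len: "length cs = m" and i: "i < m" and j: "j < m"
  defines "V \<equiv> mat_of_cols m (map conjugate us)"
  shows "(V * diag_of_list cs * mat_adjoint V) $$ (i,j) =
    (\<Sum>k<m. cnj ((us ! k) $ i) * cs ! k * (us ! k) $ j)"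
proof -
  note us = orthonormalD[OF on]
  have V: "V \<in> carrier_mat m m" using us(1) unfolding V_def by (metis length_map mat_of_cols_carrier(1))
  have S: "diag_of_list cs \<in> carrier_mat m m" using len diag_of_list_carrier(1) by metis
  have V_index: "V $$ (a,k) = cnj ((us ! k) $ a)" if "a < m" "k < m" for a k
    using that us(1) us(2)[OF that(2)] by (simp add: V_def mat_of_cols_index)
  have "(V * diag_of_list cs * mat_adjoint V) $$ (i,j) =
      (\<Sum>k<m. (V * diag_of_list cs) $$ (i,k) * mat_adjoint V $$ (k,j))"
    by (rule mult_mat_index_sum) (use V S i j in auto)
  also have "\<dots> = (\<Sum>k<m. cnj ((us ! k) $ i) * cs ! k * (us ! k) $ j)"
  proof (intro sum.cong refl)
    fix k assume "k \<in> {..<m}"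
    hence k: "k < m" by simp
    have "(V * diag_of_list cs) $$ (i,k) = V $$ (i,k) * cs ! k"
      by (rule mult_diag_of_list_index) (use V len i k in auto)
    moreover have "mat_adjoint V $$ (k,j) = (us ! k) $ j" using V j k by (simp add: V_index)
    ultimately show "(V * diag_of_list cs) $$ (i,k) * mat_adjoint V $$ (k,j) =
        cnj ((us ! k) $ i) * cs ! k * (us ! k) $ j"
      using i k by (simp add: V_index)
  qed
  finally show ?thesis .
qed

lemma vnorm_unitary_diag_similar:
  assumes V: "unitary m V" and len: "length cs = m" and unimodular: "\<forall>k<m. cmod (cs ! k) = 1"
    and z: "z \<in> carrier_vec m"
  shows "vnorm ((V * diag_of_list cs * mat_adjoint V) *\<^sub>v z) = vnorm z"
proof -
  have Vc: "V \<in> carrier_mat m m" and VA: "mat_adjoint V \<in> carrier_mat m m"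
    using V by (auto simp: unitary_def)
  have S: "diag_of_list cs \<in> carrier_mat m m" using len diag_of_list_carrier(1) by metis
  have w: "mat_adjoint V *\<^sub>v z \<in> carrier_vec m" using VA z by simp
  have "(V * diag_of_list cs * mat_adjoint V) *\<^sub>v z = V *\<^sub>v (diag_of_list cs *\<^sub>v (mat_adjoint V *\<^sub>v z))"
    using Vc S VA z w by (simp add: assoc_mult_mat_vec[of _ m m _ m])
  also have "vnorm \<dots> = vnorm (mat_adjoint V *\<^sub>v z)"
    using vnorm_unitary_mult[OF V] vnorm_diag_of_list_mult[of _ cs] S w len unimodular by simp
  also have "\<dots> = vnorm z" by (rule vnorm_unitary_mult[OF unitary_mat_adjoint[OF V] z])
  finally show ?thesis .
qed

lemma eigenbasis_pairing:
  fixes A :: "complex mat"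
  assumes A: "A \<in> carrier_mat m m" and on: "orthonormal m us" and len: "length ls = m"
    and eig: "\<forall>k<m. A *\<^sub>v us ! k = complex_of_real (ls ! k) \<cdot>\<^sub>v us ! k"
  shows "(\<Sum>i<m. \<Sum>j<m. (\<Sum>k<m. cnj ((us ! k) $ i) * cs ! k * (us ! k) $ j) * A $$ (i,j)) =
    (\<Sum>k<m. cs ! k * complex_of_real (ls ! k))"
proof -
  note us = orthonormalD[OF on]
  define g where "g = (\<lambda>k i j. cnj ((us ! k) $ i) * cs ! k * (us ! k) $ j * A $$ (i,j))"
  have "(\<Sum>i<m. \<Sum>j<m. (\<Sum>k<m. cnj ((us ! k) $ i) * cs ! k * (us ! k) $ j) * A $$ (i,j)) =
      (\<Sum>i<m. \<Sum>j<m. \<Sum>k<m. g k i j)"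
    by (simp only: g_def sum_distrib_right)
  also have "\<dots> = (\<Sum>i<m. \<Sum>k<m. \<Sum>j<m. g k i j)" by (intro sum.cong refl sum.swap)
  also have "\<dots> = (\<Sum>k<m. \<Sum>i<m. \<Sum>j<m. g k i j)" by (rule sum.swap)
  also have "\<dots> = (\<Sum>k<m. cs ! k * complex_of_real (ls ! k))"
  proof (intro sum.cong refl)
    fix k assume "k \<in> {..<m}"
    hence k: "k < m" by simp
    have "(\<Sum>i<m. \<Sum>j<m. g k i j) = (\<Sum>i<m. cs ! k * cnj ((us ! k) $ i) * (A *\<^sub>v us ! k) $ i)"
      by (intro sum.cong refl) (simp add: g_def mult_mat_vec_index_sum[OF A us(2)[OF k]]
          sum_distrib_left mult_ac)
    also have "\<dots> = cs ! k * complex_of_real (ls ! k) * (us ! k \<bullet>c us ! k)"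
      using eig k us(2)[OF k] by (simp add: cscalar_prod_sum sum_distrib_left mult_ac)
    finally show "(\<Sum>i<m. \<Sum>j<m. g k i j) = cs ! k * complex_of_real (ls ! k)"
      using us(3)[OF k k] by simp
  qed
  finally show ?thesis .
qed

lemma hermitian_trace_norm_witness:
  fixes A :: "complex mat"
  assumes A: "A \<in> carrier_mat m m" and h: "mat_adjoint A = A"
  obtains \<Gamma> where "\<Gamma> \<in> carrier_mat m m" "mat_adjoint \<Gamma> = \<Gamma>"
    "\<And>z. z \<in> carrier_vec m \<Longrightarrow> vnorm (\<Gamma> *\<^sub>v z) \<le> vnorm z / 2"
    "(\<Sum>i<m. \<Sum>j<m. \<Gamma> $$ (i,j) * A $$ (i,j)) = complex_of_real (trace_norm A / 2)"
proof -
  obtain us ls where on: "orthonormal m us" and len: "length ls = m"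
    and eig: "\<forall>k<m. A *\<^sub>v us ! k = complex_of_real (ls ! k) \<cdot>\<^sub>v us ! k"
    using hermitian_eigenbasis[OF A h] by blast
  define cs where "cs = map (\<lambda>x. complex_of_real (if 0 \<le> x then 1 else -1)) ls"
    \<comment> \<open>not \<open>sgn\<close>, which vanishes at \<open>0\<close>: the signs must stay unimodular\<close>
  define V where "V = mat_of_cols m (map conjugate us)"
  define \<Gamma> where "\<Gamma> = (1/2) \<cdot>\<^sub>m (V * diag_of_list cs * mat_adjoint V)"
  have V: "unitary m V" unfolding V_def by (rule unitary_mat_of_cols[OF orthonormal_conjugate[OF on]])
  have cs: "length cs = m" "\<And>k. k < m \<Longrightarrow> cnj (cs ! k) = cs ! k"
    "\<And>k. k < m \<Longrightarrow> cs ! k * complex_of_real (ls ! k) = complex_of_real \<bar>ls ! k\<bar>"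
    using len by (auto simp: cs_def)
  have VSV: "V * diag_of_list cs * mat_adjoint V \<in> carrier_mat m m"
    using V cs(1) diag_of_list_carrier(1)[of cs] unfolding unitary_def
    by (metis mult_carrier_mat mat_adjoint_carrier)
  hence \<Gamma>c: "\<Gamma> \<in> carrier_mat m m" by (simp add: \<Gamma>_def)
  have \<Gamma>_index: "\<Gamma> $$ (i,j) = (1/2) * (\<Sum>k<m. cnj ((us ! k) $ i) * cs ! k * (us ! k) $ j)"
    if "i < m" "j < m" for i j
    using that VSV conj_eigenbasis_diag_index[OF on cs(1) that] by (simp add: \<Gamma>_def V_def)
  have "mat_adjoint \<Gamma> = \<Gamma>"
    by (rule eq_matI) (use \<Gamma>c in \<open>auto simp: \<Gamma>_index cs(2) mult_ac\<close>)
  moreover have "vnorm (\<Gamma> *\<^sub>v z) \<le> vnorm z / 2" if z: "z \<in> carrier_vec m" for z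
    using vnorm_unitary_diag_similar[OF V cs(1) _ z] VSV z
    by (simp add: \<Gamma>_def smult_mat_mult_vec vnorm_smult cs_def len)
  moreover have "(\<Sum>i<m. \<Sum>j<m. \<Gamma> $$ (i,j) * A $$ (i,j)) = complex_of_real (trace_norm A / 2)"
  proof -
    have "(\<Sum>i<m. \<Sum>j<m. \<Gamma> $$ (i,j) * A $$ (i,j)) =
        (\<Sum>i<m. \<Sum>j<m. (1/2) * ((\<Sum>k<m. cnj ((us ! k) $ i) * cs ! k * (us ! k) $ j) * A $$ (i,j)))"
      by (intro sum.cong refl) (simp add: \<Gamma>_index mult.assoc)
    also have "\<dots> = (1/2) * (\<Sum>k<m. cs ! k * complex_of_real (ls ! k))"
      by (simp only: sum_distrib_left[symmetric] eigenbasis_pairing[OF A on len eig])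
    also have "\<dots> = complex_of_real ((\<Sum>k<m. \<bar>ls ! k\<bar>) / 2)" by (simp add: cs(3))
    finally show ?thesis by (simp add: trace_norm_eigenbasis[OF A h on len eig])
  qed
  ultimately show ?thesis using that \<Gamma>c by blast
qed

lemma gram_unitE:
  assumes "gram_unit \<rho>" and \<rho>: "\<rho> \<in> carrier_mat m m"
  obtains d vs where "\<And>i. i < m \<Longrightarrow> vs ! i \<in> carrier_vec d" "\<And>i. i < m \<Longrightarrow> vnorm (vs ! i) = 1"
    "\<And>i j. i < m \<Longrightarrow> j < m \<Longrightarrow> \<rho> $$ (i,j) = vs ! j \<bullet>c vs ! i"
proof -
  obtain d vs where len: "length vs = dim_row \<rho>" and vs: "\<forall>v\<in>set vs. v \<in> carrier_vec d \<and> vnorm v = 1"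
    and eq: "\<rho> = mat (length vs) (length vs) (\<lambda>(i,j). (vs ! j) \<bullet>c (vs ! i))"
    using assms(1) unfolding gram_unit_def by blast
  have lm: "length vs = m" using len \<rho> by simp
  show ?thesis
  proof (rule that)
    show "vs ! i \<in> carrier_vec d" "vnorm (vs ! i) = 1" if "i < m" for i using vs lm that by auto
    show "\<rho> $$ (i,j) = vs ! j \<bullet>c vs ! i" if "i < m" "j < m" for i j using lm that by (subst eq) simp
  qed
qed

lemma gram_unit_hermitian:
  assumes "gram_unit \<rho>" and \<rho>: "\<rho> \<in> carrier_mat m m"
  shows "mat_adjoint \<rho> = \<rho>"
proof -
  obtain d vs where vs: "\<And>i. i < m \<Longrightarrow> vs ! i \<in> carrier_vec d"
    and \<rho>_index: "\<And>i j. i < m \<Longrightarrow> j < m \<Longrightarrow> \<rho> $$ (i,j) = vs ! j \<bullet>c vs ! i"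
    using gram_unitE[OF assms] by metis
  show ?thesis
  proof (rule eq_matI)
    fix i j assume "i < dim_row \<rho>" "j < dim_col \<rho>"
    hence i: "i < m" and j: "j < m" using \<rho> by auto
    thus "mat_adjoint \<rho> $$ (i,j) = \<rho> $$ (i,j)"
      using \<rho> vs[OF i] vs[OF j] by (simp add: \<rho>_index cnj_cscalar_prod)
  qed (use \<rho> in auto)
qed

lemma gram_unit_diag:
  assumes "gram_unit \<rho>" and "\<rho> \<in> carrier_mat m m" and i: "i < m"
  shows "\<rho> $$ (i,i) = 1"
proof -
  obtain d vs where "\<And>i. i < m \<Longrightarrow> vnorm (vs ! i) = 1"
    and "\<And>i j. i < m \<Longrightarrow> j < m \<Longrightarrow> \<rho> $$ (i,j) = vs ! j \<bullet>c vs ! i"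
    using gram_unitE[OF assms(1,2)] by metis
  thus ?thesis using i of_real_vnorm_power2[of "vs ! i"] by simp
qed

lemma gram_unit_norm_index_le:
  assumes "gram_unit \<rho>" and "\<rho> \<in> carrier_mat m m" and i: "i < m" and j: "j < m"
  shows "cmod (\<rho> $$ (i,j)) \<le> 1"
proof -
  obtain d vs where vs: "\<And>i. i < m \<Longrightarrow> vs ! i \<in> carrier_vec d" "\<And>i. i < m \<Longrightarrow> vnorm (vs ! i) = 1"
    and "\<And>i j. i < m \<Longrightarrow> j < m \<Longrightarrow> \<rho> $$ (i,j) = vs ! j \<bullet>c vs ! i"
    using gram_unitE[OF assms(1,2)] by metis
  thus ?thesis using i j norm_cscalar_prod_le[of "vs ! i" "vs ! j"] vs(1)[OF i] vs(1)[OF j] by simp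
qed

definition adv_feasible :: "'a list list \<Rightarrow> nat \<Rightarrow> complex mat \<Rightarrow> bool" where
  "adv_feasible xs n \<Gamma> \<longleftrightarrow> \<Gamma> \<in> carrier_mat (length xs) (length xs) \<and> mat_adjoint \<Gamma> = \<Gamma> \<and>
     (\<forall>j<n. op_norm (hadamard \<Gamma> (Delta xs j)) \<le> 1)"

lemma adv_star_eq_Sup_feasible:
  "adv_star xs n \<rho> \<sigma> = Sup {op_norm (hadamard \<Gamma> (\<rho> - \<sigma>)) | \<Gamma>. adv_feasible xs n \<Gamma>}"
  unfolding adv_star_def adv_feasible_def ..

lemma adv_feasible_norm_index_le:
  assumes dist: "distinct xs" and len: "\<forall>x\<in>set xs. length x = n" and \<Gamma>: "adv_feasible xs n \<Gamma>"
    and i: "i < length xs" and j: "j < length xs" and ij: "i \<noteq> j"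
  shows "cmod (\<Gamma> $$ (i,j)) \<le> 1"
proof -
  have \<Gamma>c: "\<Gamma> \<in> carrier_mat (length xs) (length xs)" using \<Gamma> by (simp add: adv_feasible_def)
  have "xs ! i \<noteq> xs ! j" using dist i j ij by (simp add: nth_eq_iff_index_eq)
  moreover have "length (xs ! i) = n" "length (xs ! j) = n" using len i j by auto
  ultimately obtain p where p: "p < n" "xs ! i ! p \<noteq> xs ! j ! p" by (metis nth_equalityI)
  have "cmod (\<Gamma> $$ (i,j)) = cmod (hadamard \<Gamma> (Delta xs p) $$ (i,j))"
    using \<Gamma>c i j p by (simp add: Delta_def)
  also have "\<dots> \<le> op_norm (hadamard \<Gamma> (Delta xs p))"
    by (rule norm_index_le_op_norm) (use \<Gamma>c i j in auto)
  also have "\<dots> \<le> 1" using \<Gamma> p by (simp add: adv_feasible_def)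
  finally show ?thesis .
qed

lemma adv_feasible_set_bdd_above:
  assumes dist: "distinct xs" and len: "\<forall>x\<in>set xs. length x = n" and ne: "xs \<noteq> []"
    and \<rho>: "\<rho> \<in> carrier_mat (length xs) (length xs)" "gram_unit \<rho>"
    and \<sigma>: "\<sigma> \<in> carrier_mat (length xs) (length xs)" "gram_unit \<sigma>"
  shows "bdd_above {op_norm (hadamard \<Gamma> (\<rho> - \<sigma>)) | \<Gamma>. adv_feasible xs n \<Gamma>}"
proof -
  let ?m = "length xs"
  have "op_norm (hadamard \<Gamma> (\<rho> - \<sigma>)) \<le> sqrt (real (?m * ?m)) * 2" if \<Gamma>: "adv_feasible xs n \<Gamma>" for \<Gamma>
  proof -
    have \<Gamma>c: "\<Gamma> \<in> carrier_mat ?m ?m" using \<Gamma> by (simp add: adv_feasible_def)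
    have H: "hadamard \<Gamma> (\<rho> - \<sigma>) \<in> carrier_mat ?m ?m" using \<Gamma>c by simp
    have entries: "cmod (hadamard \<Gamma> (\<rho> - \<sigma>) $$ (i,j)) \<le> 2" if i: "i < ?m" and j: "j < ?m" for i j
    proof (cases "i = j")
      case True
      then show ?thesis using \<Gamma>c \<rho> \<sigma> i by (simp add: gram_unit_diag)
    next
      case False
      have "cmod ((\<rho> - \<sigma>) $$ (i,j)) \<le> cmod (\<rho> $$ (i,j)) + cmod (\<sigma> $$ (i,j))"
        using \<rho> \<sigma> i j by (simp add: norm_triangle_ineq4)
      also have "\<dots> \<le> 2" using gram_unit_norm_index_le \<rho> \<sigma> i j by (smt (verit))
      finally have "cmod (\<Gamma> $$ (i,j)) * cmod ((\<rho> - \<sigma>) $$ (i,j)) \<le> 1 * 2"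
        using adv_feasible_norm_index_le[OF dist len \<Gamma> i j False] by (intro mult_mono) auto
      thus ?thesis using \<Gamma>c \<rho> i j by (simp add: norm_mult)
    qed
    show ?thesis
    proof (rule op_norm_leI[OF H])
      fix v :: "complex vec" assume v: "v \<in> carrier_vec ?m" "vnorm v = 1"
      show "vnorm (hadamard \<Gamma> (\<rho> - \<sigma>) *\<^sub>v v) \<le> sqrt (real (?m * ?m)) * 2"
        using vnorm_mult_vec_le_entries[OF H v(1) entries] v(2) by simp
    qed (use ne in simp)
  qed
  thus ?thesis by (intro bdd_aboveI[of _ "sqrt (real (?m * ?m)) * 2"]) auto
qed

lemma adv_feasibleI:
  assumes \<Gamma>: "\<Gamma> \<in> carrier_mat (length xs) (length xs)" "mat_adjoint \<Gamma> = \<Gamma>" and ne: "xs \<noteq> []"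
    and half: "\<And>z. z \<in> carrier_vec (length xs) \<Longrightarrow> vnorm (\<Gamma> *\<^sub>v z) \<le> vnorm z / 2"
  shows "adv_feasible xs n \<Gamma>"
proof -
  have "op_norm (hadamard \<Gamma> (Delta xs j)) \<le> 1" for j
  proof (rule op_norm_leI)
    fix v :: "complex vec" assume v: "v \<in> carrier_vec (length xs)" "vnorm v = 1"
    have "vnorm (hadamard \<Gamma> (Delta xs j) *\<^sub>v v) \<le> 2 * (1/2) * vnorm v"
      unfolding Delta_def
      by (rule vnorm_hadamard_block_offdiag_le[where f = "\<lambda>i. xs ! i ! j", OF \<Gamma>(1) _ _ v(1)])
        (use half in auto)
    thus "vnorm (hadamard \<Gamma> (Delta xs j) *\<^sub>v v) \<le> 1" using v by simp
  qed (use \<Gamma> ne in auto)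
  thus ?thesis using \<Gamma> by (simp add: adv_feasible_def)
qed

lemma cscalar_prod_hadamard_conjugate:
  fixes \<Gamma> N :: "complex mat"
  assumes \<Gamma>: "\<Gamma> \<in> carrier_mat m m" and N: "N \<in> carrier_mat m m" and u: "u \<in> carrier_vec m"
  shows "(hadamard \<Gamma> N *\<^sub>v conjugate u) \<bullet>c conjugate u =
    (\<Sum>i<m. \<Sum>j<m. \<Gamma> $$ (i,j) * hadamard N (outer_self u) $$ (i,j))"
proof -
  have H: "hadamard \<Gamma> N \<in> carrier_mat m m" using \<Gamma> by simp
  have "(hadamard \<Gamma> N *\<^sub>v conjugate u) \<bullet>c conjugate u =
      (\<Sum>i<m. (hadamard \<Gamma> N *\<^sub>v conjugate u) $ i * u $ i)"
    using H u by (simp add: scalar_prod_def atLeast0LessThan del: index_mult_mat_vec)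
  also have "\<dots> = (\<Sum>i<m. \<Sum>j<m. \<Gamma> $$ (i,j) * hadamard N (outer_self u) $$ (i,j))"
    using \<Gamma> N u
    by (intro sum.cong refl) (simp add: mult_mat_vec_index_sum[OF H] outer_self_def sum_distrib_right
        sum_distrib_left mult_ac del: index_mult_mat_vec)
  finally show ?thesis .
qed

lemma trace_dist_hadamard_le_feasible:
  assumes ne: "xs \<noteq> []"
    and \<rho>: "\<rho> \<in> carrier_mat (length xs) (length xs)" "mat_adjoint \<rho> = \<rho>"
    and \<sigma>: "\<sigma> \<in> carrier_mat (length xs) (length xs)" "mat_adjoint \<sigma> = \<sigma>"
    and u: "u \<in> carrier_vec (length xs)" "vnorm u = 1"
  obtains \<Gamma> where "adv_feasible xs n \<Gamma>"
    "trace_dist (hadamard \<rho> (outer_self u)) (hadamard \<sigma> (outer_self u)) \<le> op_norm (hadamard \<Gamma> (\<rho> - \<sigma>))"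
proof -
  let ?m = "length xs" and ?N = "\<rho> - \<sigma>"
  define A where "A = hadamard ?N (outer_self u)"
  have N: "?N \<in> carrier_mat ?m ?m" using \<sigma>(1) by (rule minus_carrier_mat)
  have A: "A \<in> carrier_mat ?m ?m" using N by (simp add: A_def)
  have A_eq: "hadamard \<rho> (outer_self u) - hadamard \<sigma> (outer_self u) = A"
    using \<rho> \<sigma> u by (intro eq_matI) (auto simp: A_def outer_self_def algebra_simps)
  have "mat_adjoint A = A"
  proof (rule eq_matI)
    fix i j assume "i < dim_row A" "j < dim_col A"
    hence i: "i < ?m" and j: "j < ?m" using A by auto
    show "mat_adjoint A $$ (i,j) = A $$ (i,j)"
      using \<rho> \<sigma> u A i j
      by (simp add: A_def outer_self_def hermitian_index[OF \<rho>(2) \<rho>(1)] hermitian_index[OF \<sigma>(2) \<sigma>(1)]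
          algebra_simps)
  qed (use A in auto)
  then obtain \<Gamma> where \<Gamma>: "\<Gamma> \<in> carrier_mat ?m ?m" "mat_adjoint \<Gamma> = \<Gamma>"
    and half: "\<And>z. z \<in> carrier_vec ?m \<Longrightarrow> vnorm (\<Gamma> *\<^sub>v z) \<le> vnorm z / 2"
    and pairing: "(\<Sum>i<?m. \<Sum>j<?m. \<Gamma> $$ (i,j) * A $$ (i,j)) = complex_of_real (trace_norm A / 2)"
    using hermitian_trace_norm_witness[OF A] by blast
  have H: "hadamard \<Gamma> ?N \<in> carrier_mat ?m ?m" using \<Gamma> by simp
  have x: "conjugate u \<in> carrier_vec ?m" "vnorm (conjugate u) = 1" using u by (auto simp: vnorm_conjugate)
  have "trace_dist (hadamard \<rho> (outer_self u)) (hadamard \<sigma> (outer_self u)) = trace_norm A / 2"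
    by (simp add: trace_dist_def A_eq)
  also have "\<dots> \<le> cmod (complex_of_real (trace_norm A / 2))" by simp
  also have "\<dots> = cmod ((hadamard \<Gamma> ?N *\<^sub>v conjugate u) \<bullet>c conjugate u)"
    by (simp only: cscalar_prod_hadamard_conjugate[OF \<Gamma>(1) N u(1)] A_def[symmetric] pairing)
  also have "\<dots> \<le> vnorm (hadamard \<Gamma> ?N *\<^sub>v conjugate u)"
    using norm_cscalar_prod_le[of "conjugate u" "hadamard \<Gamma> ?N *\<^sub>v conjugate u"] \<Gamma>(1) u(1) x
    by simp
  also have "\<dots> \<le> op_norm (hadamard \<Gamma> ?N)" by (rule vnorm_le_op_norm[OF H x])
  finally show ?thesis using that adv_feasibleI[OF \<Gamma> ne half] by blast
qed

theorem proposition2p1: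
  fixes xs :: "('a::finite) list list"
    and n :: nat
    and \<rho> \<sigma> :: "complex mat"
  assumes "n \<ge> 1"
    and "distinct xs" and "xs \<noteq> []"
    and "\<forall>x\<in>set xs. length x = n"
    and "\<rho> \<in> carrier_mat (length xs) (length xs)"
    and "\<sigma> \<in> carrier_mat (length xs) (length xs)"
    and "gram_unit \<rho>" and "gram_unit \<sigma>"
  shows "hadamard_dist \<rho> \<sigma> \<le> adv_star xs n \<rho> \<sigma>"
proof -
  let ?F = "{op_norm (hadamard \<Gamma> (\<rho> - \<sigma>)) | \<Gamma>. adv_feasible xs n \<Gamma>}"
  have bdd: "bdd_above ?F" by (rule adv_feasible_set_bdd_above) (use assms in auto)
  have herm: "mat_adjoint \<rho> = \<rho>" "mat_adjoint \<sigma> = \<sigma>"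
    using gram_unit_hermitian[OF assms(7,5)] gram_unit_hermitian[OF assms(8,6)] .
  have "trace_dist (hadamard \<rho> (outer_self u)) (hadamard \<sigma> (outer_self u)) \<le> Sup ?F"
    if u: "u \<in> carrier_vec (length xs)" "vnorm u = 1" for u
  proof -
    obtain \<Gamma> where "adv_feasible xs n \<Gamma>" and le:
      "trace_dist (hadamard \<rho> (outer_self u)) (hadamard \<sigma> (outer_self u)) \<le> op_norm (hadamard \<Gamma> (\<rho> - \<sigma>))"
      by (rule trace_dist_hadamard_le_feasible[OF assms(3) assms(5) herm(1) assms(6) herm(2) u])
    hence "op_norm (hadamard \<Gamma> (\<rho> - \<sigma>)) \<in> ?F" by blast
    with le show ?thesis using cSup_upper[OF _ bdd] by force
  qed
  moreover have "length xs > 0" using assms(3) by simp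
  ultimately show ?thesis
    unfolding hadamard_dist_def adv_star_eq_Sup_feasible using assms(5) vnorm_unit_vec
    by (intro cSup_least) (auto intro!: exI[of _ "unit_vec (length xs) 0"])
qed

end
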